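(* Let $\mathcal A$ be a transitive Lie algebroid over $M$ with kernel $\mathcal L=\Gamma(\mathbb L)$, let $\mathring\omega$ be a background ordinary connection with associated splitting $\mathring\nabla$ and curvature $\mathring R\in\Omega^2(M,\mathbb L)$, let $\widehat\omega\in\Omega^1(\mathcal A,\mathcal L)$ be a (generalized) connection with curvature $\widehat R$ and reduced kernel endomorphism $\tau$, and let $\omega=\widehat\omega+\tau\circ\mathring\omega$ be the induced ordinary connection, with splitting $\nabla$ and curvature $R\in\Omega^2(M,\mathbb L)$. Put $\widehat F=R-\tau\circ\mathring R\in\Omega^2(M,\mathbb L)$. Then for all $X,Y\in\mathcal A$, $$\widehat R(X,Y)=\widehat F(\rho X,\rho Y)-\Big[(\mathcal D_{\rho(X)}\tau)(\mathring\omega(Y))-(\mathcal D_{\rho(Y)}\tau)(\mathring\omega(X))\Big]+R_\tau(\mathring\omega(X),\mathring\omega(Y)),$$ i.e. $\widehat R=\rho^*\widehat F-(\rho^*\mathcal D\tau)\circ\mathring\omega+\mathring\omega^*R_\tau$. Moreover, under an infinitesimal gauge transformation by $\xi\in\mathcal L$ (with $\mathring\omega$ fixed), each of the three terms $T$ of this decomposition transforms homogeneously, $T\mapsto T+[T,\xi]$ to first order in $\xi$.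
   Context: A transitive Lie algebroid over $M$: finitely generated projective $C^\infty(M)$-module $\mathcal A$ with Lie bracket and surjective $C^\infty(M)$-linear Lie morphism $\rho:\mathcal A\to\Gamma(TM)$, $[X,fY]=f[X,Y]+(\rho(X)f)Y$; kernel $\mathcal L=\ker\rho=\Gamma(\mathbb L)$, inclusion $\iota$ (we identify $\mathcal L$ with $\iota(\mathcal L)$). $\Omega^\bullet(\mathcal A,\mathcal L)$ has the Chevalley–Eilenberg differential $\hat d$ for the adjoint representation $X\cdot\gamma=[X,\iota\gamma]$ and bracket induced by that of $\mathcal L$. A (generalized) connection is any $\widehat\omega\in\Omega^1(\mathcal A,\mathcal L)$, with curvature $\widehat R=\hat d\widehat\omega+\frac12[\widehat\omega,\widehat\omega]$ (so $\widehat R(X,Y)=[X,\iota\widehat\omega(Y)]-[Y,\iota\widehat\omega(X)]-\widehat\omega([X,Y])+[\widehat\omega(X),\widehat\omega(Y)]$) and infinitesimal gauge transformation $\widehat\omega^\xi=\widehat\omega+\hat d\xi+[\widehat\omega,\xi]$. Its reduced kernel endomorphism is $\tau=\widehat\omega\circ\iota+\mathrm{Id}_{\mathcal L}\in\mathrm{End}(\mathbb L)$. An ordinary connection is given by a $C^\infty(M)$-linear splitting $\nabla:\Gamma(TM)\to\mathcal A$ of $\rho$, with 1-form $\omega$ defined by $X=\nabla_{\rho X}-\iota\omega(X)$ (equivalently $\omega\circ\iota=-\mathrm{Id}$), and curvature $R\in\Omega^2(M,\mathbb L)$ defined by $\iota R(X,Y)=[\nabla_X,\nabla_Y]-\nabla_{[X,Y]}$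 for $X,Y\in\Gamma(TM)$. For a background ordinary connection $\mathring\omega$ (splitting $\mathring\nabla$), the 1-form $\widehat\omega+\tau\circ\mathring\omega$ is an ordinary connection. For $X\in\Gamma(TM)$, $\mathcal D_X\tau\in\mathrm{End}(\mathbb L)$ is $(\mathcal D_X\tau)(\gamma)=[\nabla_X,\tau(\gamma)]-\tau([\mathring\nabla_X,\gamma])$. The algebraic curvature of $\tau$ is $R_\tau(\gamma,\eta)=[\tau(\gamma),\tau(\eta)]-\tau([\gamma,\eta])$. *)

theory Defs
  imports Main "HOL.Real_Vector_Spaces"
begin

text \<open>Algebraic (Lie--Rinehart) rendering of a transitive Lie algebroid.
  'r plays the role of C-infinity(M), 'v of the vector fields Gamma(TM),
  'a of the sections of the algebroid. The kernel L is the subspace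
  {X. rho X = 0} of 'a (L is identified with its image under the inclusion).\<close>

definition lie_algebra :: "('m::real_vector \<Rightarrow> 'm \<Rightarrow> 'm) \<Rightarrow> bool" where
  "lie_algebra br \<longleftrightarrow>
     (\<forall>a b x y z. br (a *\<^sub>R x + b *\<^sub>R y) z = a *\<^sub>R br x z + b *\<^sub>R br y z) \<and>
     (\<forall>x y. br x y = - br y x) \<and>
     (\<forall>x y z. br x (br y z) + br y (br z x) + br z (br x y) = 0)"

definition rmodule ::
  "('r::{comm_ring_1,real_algebra_1} \<Rightarrow> 'm::real_vector \<Rightarrow> 'm) \<Rightarrow> bool" where
  "rmodule sm \<longleftrightarrow>
     (\<forall>f g x. sm (f + g) x = sm f x + sm g x) \<and>
     (\<forall>f x y. sm f (x + y) = sm f x + sm f y) \<and>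
     (\<forall>f g x. sm (f * g) x = sm f (sm g x)) \<and>
     (\<forall>x. sm 1 x = x) \<and>
     (\<forall>c x. sm (of_real c) x = c *\<^sub>R x)"

definition lie_rinehart ::
  "('r::{comm_ring_1,real_algebra_1} \<Rightarrow> 'm::real_vector \<Rightarrow> 'm) \<Rightarrow>
   ('m \<Rightarrow> 'm \<Rightarrow> 'm) \<Rightarrow> ('m \<Rightarrow> 'r \<Rightarrow> 'r) \<Rightarrow> bool" where
  "lie_rinehart sm br anc \<longleftrightarrow>
     rmodule sm \<and> lie_algebra br \<and>
     (\<forall>X f g. anc X (f + g) = anc X f + anc X g) \<and>
     (\<forall>X c f. anc X (c *\<^sub>R f) = c *\<^sub>R anc X f) \<and>
     (\<forall>X f g. anc X (f * g) = f * anc X g + anc X f * g) \<and>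
     (\<forall>X Y f. anc (X + Y) f = anc X f + anc Y f) \<and>
     (\<forall>X g f. anc (sm g X) f = g * anc X f) \<and>
     (\<forall>X Y f. anc (br X Y) f = anc X (anc Y f) - anc Y (anc X f)) \<and>
     (\<forall>X Y f. br X (sm f Y) = sm f (br X Y) + sm (anc X f) Y)"

text \<open>Transitive Lie algebroid: Gamma(TM) is the Lie--Rinehart algebra (smV, brV, der),
  the algebroid is (smA, brA) with anchor der o rho, and rho is a surjective
  C-infinity-linear Lie algebra morphism.\<close>
definition transitive_lie_algebroid ::
  "('r::{comm_ring_1,real_algebra_1} \<Rightarrow> 'v::real_vector \<Rightarrow> 'v) \<Rightarrow> ('v \<Rightarrow> 'v \<Rightarrow> 'v) \<Rightarrow>
   ('v \<Rightarrow> 'r \<Rightarrow> 'r) \<Rightarrow> ('r \<Rightarrow> 'a::real_vector \<Rightarrow> 'a) \<Rightarrow> ('a \<Rightarrow> 'a \<Rightarrow> 'a) \<Rightarrow>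
   ('a \<Rightarrow> 'v) \<Rightarrow> bool" where
  "transitive_lie_algebroid smV brV der smA brA \<rho> \<longleftrightarrow>
     lie_rinehart smV brV der \<and>
     lie_rinehart smA brA (\<lambda>X. der (\<rho> X)) \<and>
     (\<forall>X Y. \<rho> (X + Y) = \<rho> X + \<rho> Y) \<and>
     (\<forall>f X. \<rho> (smA f X) = smV f (\<rho> X)) \<and>
     (\<forall>X Y. \<rho> (brA X Y) = brV (\<rho> X) (\<rho> Y)) \<and>
     surj \<rho>"

definition gen_connection ::
  "('r \<Rightarrow> 'a::real_vector \<Rightarrow> 'a) \<Rightarrow> ('a \<Rightarrow> 'v::real_vector) \<Rightarrow> ('a \<Rightarrow> 'a) \<Rightarrow> bool" where
  "gen_connection smA \<rho> \<omega> \<longleftrightarrow>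
     (\<forall>X Y. \<omega> (X + Y) = \<omega> X + \<omega> Y) \<and>
     (\<forall>f X. \<omega> (smA f X) = smA f (\<omega> X)) \<and>
     (\<forall>X. \<rho> (\<omega> X) = 0)"

definition ordinary_connection ::
  "('r \<Rightarrow> 'a::real_vector \<Rightarrow> 'a) \<Rightarrow> ('a \<Rightarrow> 'v::real_vector) \<Rightarrow> ('a \<Rightarrow> 'a) \<Rightarrow> bool" where
  "ordinary_connection smA \<rho> \<omega> \<longleftrightarrow>
     gen_connection smA \<rho> \<omega> \<and> (\<forall>\<gamma>. \<rho> \<gamma> = 0 \<longrightarrow> \<omega> \<gamma> = - \<gamma>)"

text \<open>Splitting associated with an ordinary connection: X = nabla (rho X) - omega X,
  i.e. nabla v = X + omega X for any X with rho X = v.\<close>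
definition splitting_of :: "('a::real_vector \<Rightarrow> 'v) \<Rightarrow> ('a \<Rightarrow> 'a) \<Rightarrow> 'v \<Rightarrow> 'a" where
  "splitting_of \<rho> \<omega> v = (let X = (SOME X. \<rho> X = v) in X + \<omega> X)"

definition split_curv ::
  "('a::real_vector \<Rightarrow> 'a \<Rightarrow> 'a) \<Rightarrow> ('v \<Rightarrow> 'v \<Rightarrow> 'v) \<Rightarrow> ('v \<Rightarrow> 'a) \<Rightarrow> 'v \<Rightarrow> 'v \<Rightarrow> 'a" where
  "split_curv brA brV nab v w = brA (nab v) (nab w) - nab (brV v w)"

text \<open>Reduced kernel endomorphism tau = omega o iota + Id (meaningful on L).\<close>
definition red_kernel_endo :: "('a::real_vector \<Rightarrow> 'a) \<Rightarrow> 'a \<Rightarrow> 'a" where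
  "red_kernel_endo \<omega> \<gamma> = \<omega> \<gamma> + \<gamma>"

definition induced_connection :: "('a::real_vector \<Rightarrow> 'a) \<Rightarrow> ('a \<Rightarrow> 'a) \<Rightarrow> 'a \<Rightarrow> 'a" where
  "induced_connection \<omega>h \<omega>o X = \<omega>h X + red_kernel_endo \<omega>h (\<omega>o X)"

definition gen_curv :: "('a::real_vector \<Rightarrow> 'a \<Rightarrow> 'a) \<Rightarrow> ('a \<Rightarrow> 'a) \<Rightarrow> 'a \<Rightarrow> 'a \<Rightarrow> 'a" where
  "gen_curv brA \<omega> X Y = brA X (\<omega> Y) - brA Y (\<omega> X) - \<omega> (brA X Y) + brA (\<omega> X) (\<omega> Y)"

definition Fhat ::
  "('a::real_vector \<Rightarrow> 'a \<Rightarrow> 'a) \<Rightarrow> ('v \<Rightarrow> 'v \<Rightarrow> 'v) \<Rightarrow> ('a \<Rightarrow> 'v) \<Rightarrow> ('a \<Rightarrow> 'a) \<Rightarrow> ('a \<Rightarrow> 'a)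
   \<Rightarrow> 'v \<Rightarrow> 'v \<Rightarrow> 'a" where
  "Fhat brA brV \<rho> \<omega>o \<omega>h v w =
     split_curv brA brV (splitting_of \<rho> (induced_connection \<omega>h \<omega>o)) v w
     - red_kernel_endo \<omega>h (split_curv brA brV (splitting_of \<rho> \<omega>o) v w)"

definition Dtau ::
  "('a::real_vector \<Rightarrow> 'a \<Rightarrow> 'a) \<Rightarrow> ('a \<Rightarrow> 'v) \<Rightarrow> ('a \<Rightarrow> 'a) \<Rightarrow> ('a \<Rightarrow> 'a) \<Rightarrow> 'v \<Rightarrow> 'a \<Rightarrow> 'a" where
  "Dtau brA \<rho> \<omega>o \<omega>h v \<gamma> =
     brA (splitting_of \<rho> (induced_connection \<omega>h \<omega>o) v) (red_kernel_endo \<omega>h \<gamma>)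
     - red_kernel_endo \<omega>h (brA (splitting_of \<rho> \<omega>o v) \<gamma>)"

definition alg_curv :: "('a::real_vector \<Rightarrow> 'a \<Rightarrow> 'a) \<Rightarrow> ('a \<Rightarrow> 'a) \<Rightarrow> 'a \<Rightarrow> 'a \<Rightarrow> 'a" where
  "alg_curv brA \<omega>h \<gamma> \<eta> =
     brA (red_kernel_endo \<omega>h \<gamma>) (red_kernel_endo \<omega>h \<eta>) - red_kernel_endo \<omega>h (brA \<gamma> \<eta>)"

text \<open>Infinitesimal gauge transformation omega + d xi + [omega, xi].\<close>
definition gauge :: "('a::real_vector \<Rightarrow> 'a \<Rightarrow> 'a) \<Rightarrow> ('a \<Rightarrow> 'a) \<Rightarrow> 'a \<Rightarrow> 'a \<Rightarrow> 'a" where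
  "gauge brA \<omega> \<xi> X = \<omega> X + brA X \<xi> + brA (\<omega> X) \<xi>"

definition term_F :: "('a::real_vector \<Rightarrow> 'a \<Rightarrow> 'a) \<Rightarrow> ('v \<Rightarrow> 'v \<Rightarrow> 'v) \<Rightarrow> ('a \<Rightarrow> 'v)
   \<Rightarrow> ('a \<Rightarrow> 'a) \<Rightarrow> ('a \<Rightarrow> 'a) \<Rightarrow> 'a \<Rightarrow> 'a \<Rightarrow> 'a" where
  "term_F brA brV \<rho> \<omega>o \<omega>h X Y = Fhat brA brV \<rho> \<omega>o \<omega>h (\<rho> X) (\<rho> Y)"

definition term_D :: "('a::real_vector \<Rightarrow> 'a \<Rightarrow> 'a) \<Rightarrow> ('a \<Rightarrow> 'v)
   \<Rightarrow> ('a \<Rightarrow> 'a) \<Rightarrow> ('a \<Rightarrow> 'a) \<Rightarrow> 'a \<Rightarrow> 'a \<Rightarrow> 'a" where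
  "term_D brA \<rho> \<omega>o \<omega>h X Y =
     Dtau brA \<rho> \<omega>o \<omega>h (\<rho> X) (\<omega>o Y) - Dtau brA \<rho> \<omega>o \<omega>h (\<rho> Y) (\<omega>o X)"

definition term_R :: "('a::real_vector \<Rightarrow> 'a \<Rightarrow> 'a) \<Rightarrow> ('a \<Rightarrow> 'a) \<Rightarrow> ('a \<Rightarrow> 'a) \<Rightarrow> 'a \<Rightarrow> 'a \<Rightarrow> 'a" where
  "term_R brA \<omega>o \<omega>h X Y = alg_curv brA \<omega>h (\<omega>o X) (\<omega>o Y)"

text \<open>T transforms homogeneously to first order under the gauge transformation by xi:
  t \<mapsto> T(omega^(t xi))(X,Y) is a polynomial in t whose constant coefficient is
  T(omega)(X,Y) and whose linear coefficient is [T(omega)(X,Y), xi].\<close>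
definition first_order_homogeneous ::
  "('a::real_vector \<Rightarrow> 'a \<Rightarrow> 'a) \<Rightarrow> (('a \<Rightarrow> 'a) \<Rightarrow> 'a \<Rightarrow> 'a \<Rightarrow> 'a) \<Rightarrow> ('a \<Rightarrow> 'a) \<Rightarrow> 'a \<Rightarrow> bool" where
  "first_order_homogeneous brA T \<omega> \<xi> \<longleftrightarrow>
     (\<forall>X Y. \<exists>n c. (\<forall>t::real. T (gauge brA \<omega> (t *\<^sub>R \<xi>)) X Y = (\<Sum>k\<le>n. t ^ k *\<^sub>R c k))
                 \<and> c 0 = T \<omega> X Y \<and> c 1 = brA (T \<omega> X Y) \<xi>)"

end

theory Submission
  imports Defs
begin

text \<open>Put \<open>\<tau> = \<omega>h + id\<close> on all of the algebroid and \<open>\<nabla>o = splitting_of \<rho> \<omega>o\<close>.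
  Then \<open>gen_curv \<omega>h = alg_curv \<omega>h = R\<^sub>\<tau>\<close>, and the splitting of the induced connection is \<open>\<tau> \<circ> \<nabla>o\<close>, whence
  \<open>Fhat v w = R\<^sub>\<tau> (\<nabla>o v) (\<nabla>o w)\<close> and \<open>Dtau v \<gamma> = R\<^sub>\<tau> (\<nabla>o v) \<gamma>\<close>. The decomposition is the
  bilinear expansion of \<open>R\<^sub>\<tau> X Y\<close> along \<open>X = \<nabla>o (\<rho> X) - \<omega>o X\<close>. So all three terms are values
  of \<open>R\<^sub>\<tau>\<close> at arguments independent of \<open>\<omega>h\<close>; the gauge transformation by \<open>t \<xi>\<close> replaces
  \<open>\<tau>\<close> by \<open>\<tau> + t [\<tau> _, \<xi>]\<close>, and since \<open>[_, \<xi>]\<close> is a derivation, \<open>R\<^sub>\<tau>\<close> changes to first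
  order by \<open>[R\<^sub>\<tau>, \<xi>]\<close>.\<close>

locale lie_bracket =
  fixes br :: "'a::real_vector \<Rightarrow> 'a \<Rightarrow> 'a"
  assumes lie_algebra: "lie_algebra br"
begin

lemma add_left: "br (x + y) z = br x z + br y z"
  using lie_algebra unfolding lie_algebra_def by (metis scaleR_one)

lemma scaleR_left: "br (c *\<^sub>R x) z = c *\<^sub>R br x z"
  using lie_algebra unfolding lie_algebra_def
  by (metis add.right_neutral scaleR_zero_left)

lemma skew: "br x y = - br y x"
  using lie_algebra unfolding lie_algebra_def by blast

lemma jacobi: "br x (br y z) + br y (br z x) + br z (br x y) = 0"
  using lie_algebra unfolding lie_algebra_def by blast

lemma add_right: "br x (y + z) = br x y + br x z"
  using skew[of x] skew[of y x] skew[of z x] by (simp add: add_left)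

lemma scaleR_right: "br x (c *\<^sub>R z) = c *\<^sub>R br x z"
  using skew[of x] skew[of z x] by (simp add: scaleR_left)

lemma additive_left: "additive (\<lambda>x. br x z)"
  by (rule additive.intro) (rule add_left)

lemma additive_right: "additive (br x)"
  by (rule additive.intro) (rule add_right)

lemmas minus_left = additive.minus [OF additive_left]
lemmas minus_right = additive.minus [OF additive_right]
lemmas diff_left = additive.diff [OF additive_left]
lemmas diff_right = additive.diff [OF additive_right]

lemmas bilinear = add_left add_right scaleR_left scaleR_right
  minus_left minus_right diff_left diff_right

lemma leibniz: "br (br x y) z = br (br x z) y + br x (br y z)"
proof -
  have "br (br x y) z = - br z (br x y)"
    by (rule skew)
  also have "\<dots> = br x (br y z) + br y (br z x)"
    using jacobi[of z x y] by (simp add: add_eq_0_iff2 add.commute)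
  also have "br y (br z x) = br (br x z) y"
    using skew[of y "br z x"] skew[of z x] by (simp add: minus_left)
  finally show ?thesis
    by simp
qed

lemma bracket_ad_expansion:
  "br (p + t *\<^sub>R br p \<xi>) (q + t *\<^sub>R br q \<xi>) =
     br p q + t *\<^sub>R br (br p q) \<xi> + t\<^sup>2 *\<^sub>R br (br p \<xi>) (br q \<xi>)"
  by (simp add: bilinear leibniz[of p q \<xi>] power2_eq_square algebra_simps)

end

lemma additive_red_kernel_endo:
  assumes "additive \<omega>"
  shows "additive (red_kernel_endo \<omega>)"
  using additive.add[OF assms]
  by unfold_locales (simp add: red_kernel_endo_def algebra_simps)

lemma splitting_of_anchor:
  assumes "additive \<rho>" and "additive \<omega>" and kernel: "\<And>\<gamma>. \<rho> \<gamma> = 0 \<Longrightarrow> \<omega> \<gamma> = - \<gamma>"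
  shows "splitting_of \<rho> \<omega> (\<rho> Z) = Z + \<omega> Z"
proof -
  define Z' where "Z' = (SOME X. \<rho> X = \<rho> Z)"
  have "\<rho> Z' = \<rho> Z"
    unfolding Z'_def by (rule someI) (rule refl)
  then have "\<omega> (Z' - Z) = - (Z' - Z)"
    by (intro kernel) (simp add: additive.diff[OF \<open>additive \<rho>\<close>])
  then have "Z' + \<omega> Z' = Z + \<omega> Z"
    by (simp add: additive.diff[OF \<open>additive \<omega>\<close>] algebra_simps)
  then show ?thesis
    unfolding splitting_of_def Let_def Z'_def .
qed

lemma splitting_of_induced_connection:
  assumes "additive \<omega>h"
  shows "splitting_of \<rho> (induced_connection \<omega>h \<omega>o) v =
    red_kernel_endo \<omega>h (splitting_of \<rho> \<omega>o v)"
  using additive.add[OF additive_red_kernel_endo[OF assms]]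
  by (simp add: splitting_of_def Let_def induced_connection_def red_kernel_endo_def algebra_simps)

lemma Fhat_eq_alg_curv:
  assumes "additive \<omega>h"
  shows "Fhat br brV \<rho> \<omega>o \<omega>h v w =
    alg_curv br \<omega>h (splitting_of \<rho> \<omega>o v) (splitting_of \<rho> \<omega>o w)"
  using additive.diff[OF additive_red_kernel_endo[OF assms]]
  by (simp add: Fhat_def split_curv_def alg_curv_def splitting_of_induced_connection[OF assms])

lemma Dtau_eq_alg_curv:
  assumes "additive \<omega>h"
  shows "Dtau br \<rho> \<omega>o \<omega>h v \<gamma> = alg_curv br \<omega>h (splitting_of \<rho> \<omega>o v) \<gamma>"
  by (simp add: Dtau_def alg_curv_def splitting_of_induced_connection[OF assms])

lemma first_order_homogeneousI:
  assumes "\<And>X Y. \<exists>C. \<forall>t. T (gauge br \<omega> (t *\<^sub>R \<xi>)) X Y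
             = T \<omega> X Y + t *\<^sub>R br (T \<omega> X Y) \<xi> + t\<^sup>2 *\<^sub>R C"
  shows "first_order_homogeneous br T \<omega> \<xi>"
  unfolding first_order_homogeneous_def
proof (intro allI)
  fix X Y
  obtain C where C: "\<forall>t. T (gauge br \<omega> (t *\<^sub>R \<xi>)) X Y
             = T \<omega> X Y + t *\<^sub>R br (T \<omega> X Y) \<xi> + t\<^sup>2 *\<^sub>R C"
    using assms by blast
  define c where "c k = (if k = 0 then T \<omega> X Y else if k = 1 then br (T \<omega> X Y) \<xi> else C)"
    for k :: nat
  have "\<forall>t::real. T (gauge br \<omega> (t *\<^sub>R \<xi>)) X Y = (\<Sum>k\<le>2. t ^ k *\<^sub>R c k)"
    using C by (simp add: c_def numeral_2_eq_2)
  then show "\<exists>n c. (\<forall>t::real. T (gauge br \<omega> (t *\<^sub>R \<xi>)) X Y = (\<Sum>k\<le>n. t ^ k *\<^sub>R c k))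
                 \<and> c 0 = T \<omega> X Y \<and> c 1 = br (T \<omega> X Y) \<xi>"
    by (intro exI[of _ 2] exI[of _ c]) (simp add: c_def)
qed

context lie_bracket
begin

lemma gen_curv_eq_alg_curv:
  assumes "additive \<omega>"
  shows "gen_curv br \<omega> X Y = alg_curv br \<omega> X Y"
  using additive.add[OF assms] skew[of Y "\<omega> X"]
  by (simp add: gen_curv_def alg_curv_def red_kernel_endo_def bilinear algebra_simps)

lemma alg_curv_diff_left:
  assumes "additive \<omega>"
  shows "alg_curv br \<omega> (a - b) c = alg_curv br \<omega> a c - alg_curv br \<omega> b c"
  using additive.diff[OF additive_red_kernel_endo[OF assms]]
  by (simp add: alg_curv_def bilinear)

lemma alg_curv_diff_right:
  assumes "additive \<omega>"
  shows "alg_curv br \<omega> a (b - c) = alg_curv br \<omega> a b - alg_curv br \<omega> a c"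
  using additive.diff[OF additive_red_kernel_endo[OF assms]]
  by (simp add: alg_curv_def bilinear)

lemma alg_curv_skew:
  assumes "additive \<omega>"
  shows "alg_curv br \<omega> a b = - alg_curv br \<omega> b a"
  using additive.minus[OF additive_red_kernel_endo[OF assms]] skew[of a b]
    skew[of "red_kernel_endo \<omega> a"]
  by (simp add: alg_curv_def)

lemma gen_curv_decomposition:
  assumes "additive \<omega>h" and "additive \<rho>" and "additive \<omega>o"
    and "\<And>\<gamma>. \<rho> \<gamma> = 0 \<Longrightarrow> \<omega>o \<gamma> = - \<gamma>"
  shows "gen_curv br \<omega>h X Y =
    Fhat br brV \<rho> \<omega>o \<omega>h (\<rho> X) (\<rho> Y)
    - (Dtau br \<rho> \<omega>o \<omega>h (\<rho> X) (\<omega>o Y) - Dtau br \<rho> \<omega>o \<omega>h (\<rho> Y) (\<omega>o X))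
    + alg_curv br \<omega>h (\<omega>o X) (\<omega>o Y)"
proof -
  let ?N = "\<lambda>X. splitting_of \<rho> \<omega>o (\<rho> X)"
  have "Z = ?N Z - \<omega>o Z" for Z
    using splitting_of_anchor[OF assms(2-4)] by simp
  then have "gen_curv br \<omega>h X Y = alg_curv br \<omega>h (?N X - \<omega>o X) (?N Y - \<omega>o Y)"
    using gen_curv_eq_alg_curv[OF assms(1)] by metis
  also have "\<dots> = alg_curv br \<omega>h (?N X) (?N Y)
      - (alg_curv br \<omega>h (?N X) (\<omega>o Y) - alg_curv br \<omega>h (?N Y) (\<omega>o X))
      + alg_curv br \<omega>h (\<omega>o X) (\<omega>o Y)"
    using alg_curv_skew[OF assms(1), of "\<omega>o X" "?N Y"]
    by (simp add: alg_curv_diff_left[OF assms(1)] alg_curv_diff_right[OF assms(1)])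
  finally show ?thesis
    by (simp add: Fhat_eq_alg_curv[OF assms(1)] Dtau_eq_alg_curv[OF assms(1)])
qed

lemma additive_gauge:
  assumes "additive \<omega>"
  shows "additive (gauge br \<omega> \<xi>)"
  using additive.add[OF assms]
  by unfold_locales (simp add: gauge_def bilinear algebra_simps)

lemma red_kernel_endo_gauge:
  "red_kernel_endo (gauge br \<omega> \<xi>) z = red_kernel_endo \<omega> z + br (red_kernel_endo \<omega> z) \<xi>"
  by (simp add: red_kernel_endo_def gauge_def bilinear algebra_simps)

lemma alg_curv_gauge:
  "alg_curv br (gauge br \<omega> (t *\<^sub>R \<xi>)) a b =
     alg_curv br \<omega> a b + t *\<^sub>R br (alg_curv br \<omega> a b) \<xi>
     + t\<^sup>2 *\<^sub>R br (br (red_kernel_endo \<omega> a) \<xi>) (br (red_kernel_endo \<omega> b) \<xi>)"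
  unfolding alg_curv_def red_kernel_endo_gauge scaleR_right bracket_ad_expansion
  by (simp add: bilinear algebra_simps)

lemma term_F_homogeneous:
  assumes "additive \<omega>"
  shows "first_order_homogeneous br (term_F br brV \<rho> \<omega>o) \<omega> \<xi>"
  using assms additive_gauge[OF assms]
  by (intro first_order_homogeneousI)
    (auto simp: term_F_def Fhat_eq_alg_curv alg_curv_gauge)

lemma term_D_homogeneous:
  assumes "additive \<omega>"
  shows "first_order_homogeneous br (term_D br \<rho> \<omega>o) \<omega> \<xi>"
proof (rule first_order_homogeneousI)
  fix X Y
  let ?ad = "\<lambda>z. br (red_kernel_endo \<omega> z) \<xi>" and ?N = "\<lambda>X. splitting_of \<rho> \<omega>o (\<rho> X)"
  show "\<exists>C. \<forall>t. term_D br \<rho> \<omega>o (gauge br \<omega> (t *\<^sub>R \<xi>)) X Y =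
    term_D br \<rho> \<omega>o \<omega> X Y + t *\<^sub>R br (term_D br \<rho> \<omega>o \<omega> X Y) \<xi> + t\<^sup>2 *\<^sub>R C"
    using assms additive_gauge[OF assms]
    by (intro exI[of _ "br (?ad (?N X)) (?ad (\<omega>o Y)) - br (?ad (?N Y)) (?ad (\<omega>o X))"])
      (simp add: term_D_def Dtau_eq_alg_curv alg_curv_gauge bilinear algebra_simps)
qed

lemma term_R_homogeneous:
  "first_order_homogeneous br (term_R br \<omega>o) \<omega> \<xi>"
  by (intro first_order_homogeneousI) (auto simp: term_R_def alg_curv_gauge)

end

theorem proposition3p6:
  fixes smV :: "'r::{comm_ring_1,real_algebra_1} \<Rightarrow> 'v::real_vector \<Rightarrow> 'v"
    and brV :: "'v \<Rightarrow> 'v \<Rightarrow> 'v"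
    and der :: "'v \<Rightarrow> 'r \<Rightarrow> 'r"
    and smA :: "'r \<Rightarrow> 'a::real_vector \<Rightarrow> 'a"
    and brA :: "'a \<Rightarrow> 'a \<Rightarrow> 'a"
    and \<rho> :: "'a \<Rightarrow> 'v"
    and \<omega>o \<omega>h :: "'a \<Rightarrow> 'a"
  assumes "transitive_lie_algebroid smV brV der smA brA \<rho>"
    and "ordinary_connection smA \<rho> \<omega>o"
    and "gen_connection smA \<rho> \<omega>h"
  shows "(\<forall>X Y. gen_curv brA \<omega>h X Y =
            Fhat brA brV \<rho> \<omega>o \<omega>h (\<rho> X) (\<rho> Y)
            - (Dtau brA \<rho> \<omega>o \<omega>h (\<rho> X) (\<omega>o Y) - Dtau brA \<rho> \<omega>o \<omega>h (\<rho> Y) (\<omega>o X))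
            + alg_curv brA \<omega>h (\<omega>o X) (\<omega>o Y)) \<and>
         (\<forall>\<xi>. \<rho> \<xi> = 0 \<longrightarrow>
            first_order_homogeneous brA (term_F brA brV \<rho> \<omega>o) \<omega>h \<xi> \<and>
            first_order_homogeneous brA (term_D brA \<rho> \<omega>o) \<omega>h \<xi> \<and>
            first_order_homogeneous brA (term_R brA \<omega>o) \<omega>h \<xi>)"
proof -
  interpret lie_bracket brA
    using assms(1) by unfold_locales (simp add: transitive_lie_algebroid_def lie_rinehart_def)
  have "additive \<rho>" "additive \<omega>o" "additive \<omega>h"
    using assms unfolding transitive_lie_algebroid_def ordinary_connection_def gen_connection_def
    by (auto intro: additive.intro)
  moreover have "\<And>\<gamma>. \<rho> \<gamma> = 0 \<Longrightarrow> \<omega>o \<gamma> = - \<gamma>"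
    using assms(2) unfolding ordinary_connection_def by blast
  ultimately show ?thesis
    using gen_curv_decomposition term_F_homogeneous term_D_homogeneous term_R_homogeneous
    by blast
qed

end
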